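(* Let $q\ge 2$ and $n\ge 1$ be integers. Then: (i) $I_q(n,2)=q^n$ and $I_q(n,2n)=q$. (ii) For every even integer $d$ with $4\le d\le 2n-2$, one has $I_q(n,d)\le \frac12\left(q^{\,n-\frac d2+1}+q^{\,n-\frac d2}\right)$. (iii) For every even integer $d$ with $2q\le d\le 2n-2$, one has $I_q(n,d)\le q^{\,n-\frac d2}$.
   Context: $[q]=\{1,\dots,q\}$ and $[q]^n$ is the set of words of length $n$ over $[q]$; a $q$-ary code of length $n$ is a subset of $[q]^n$ with at least two elements. For $\mathbf u,\mathbf v\in[q]^n$, $\ell_{\rm LCS}(\mathbf u,\mathbf v)$ is the length of a longest common subsequence of $\mathbf u$ and $\mathbf v$, and the insdel distance $d_I(\mathbf u,\mathbf v)$ is the minimum number of insertions and deletions of symbols transforming $\mathbf u$ into $\mathbf v$; equivalently $d_I(\mathbf u,\mathbf v)=2n-2\ell_{\rm LCS}(\mathbf u,\mathbf v)$. The insdel distance $d_I(\mathcal C)$ of a code $\mathcal C$ is the minimum of $d_I(\mathbf u,\mathbf v)$ over distinct $\mathbf u,\mathbf v\in\mathcal C$. $I_q(n,d)$ denotes the largest size $M$ of a code $\mathcal C\subseteq[q]^n$ with $d_I(\mathcal C)\ge d$. *)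

theory Defs
  imports Complex_Main "HOL-Library.Sublist"
begin

definition words :: "nat \<Rightarrow> nat \<Rightarrow> nat list set" where
  "words q n = {w. length w = n \<and> set w \<subseteq> {1..q}}"

definition lcs_len :: "'a list \<Rightarrow> 'a list \<Rightarrow> nat" where
  "lcs_len u v = Max (length ` {w. subseq w u \<and> subseq w v})"

text \<open>Insdel distance, via d_I(u,v) = |u| + |v| - 2 LCS(u,v) (= 2n - 2 LCS for words of length n).\<close>
definition insdel_dist :: "'a list \<Rightarrow> 'a list \<Rightarrow> nat" where
  "insdel_dist u v = length u + length v - 2 * lcs_len u v"

definition code_insdel_dist :: "'a list set \<Rightarrow> nat" where
  "code_insdel_dist C = Min {insdel_dist u v | u v. u \<in> C \<and> v \<in> C \<and> u \<noteq> v}"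

definition I_q :: "nat \<Rightarrow> nat \<Rightarrow> nat \<Rightarrow> nat" where
  "I_q q n d = Max {card C | C. C \<subseteq> words q n \<and> 2 \<le> card C \<and> d \<le> code_insdel_dist C}"

end

theory Submission
  imports Defs
begin

text \<open>A code of length \<open>n\<close> has insdel distance at least \<open>2t\<close> iff distinct codewords
  have LCS at most \<open>n - t\<close>; all of \<open>[q]\<^sup>n\<close> and the \<open>q\<close> constant words give the lower
  bounds. Grouping the codewords by their first letter and deleting it lowers both the length
  and the LCS bound by one at the cost of a factor \<open>q\<close>, which reduces the upper bounds to codes
  with pairwise LCS at most \<open>0\<close> or \<open>1\<close>. There, distinct codewords share no subsequence of
  length \<open>1\<close> resp. \<open>2\<close>, so the sets of such subsequences of the codewords are disjoint
  subsets of \<open>[q]\<^sup>1\<close> resp. \<open>[q]\<^sup>2\<close>. A word longer than \<open>q\<close> contains some \<open>aa\<close>, giving at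
  most \<open>q\<close> codewords; a non-constant word of length at least \<open>3\<close> contains two distinct
  subsequences of length \<open>2\<close>, giving at most \<open>(q\<^sup>2 + q)/2\<close> codewords.\<close>

lemma finite_common_subseqs: "finite {w. subseq w u \<and> subseq w v}"
proof -
  have "finite {w. subseq w u}" by (metis List.finite_set set_subseqs_eq)
  then show ?thesis by (rule finite_subset[rotated]) auto
qed

lemma lcs_len_ge: "subseq w u \<Longrightarrow> subseq w v \<Longrightarrow> length w \<le> lcs_len u v"
  unfolding lcs_len_def by (rule Max_ge) (use finite_common_subseqs in auto)

lemma lcs_len_attained:
  obtains w where "subseq w u" "subseq w v" "length w = lcs_len u v"
proof -
  have "lcs_len u v \<in> length ` {w. subseq w u \<and> subseq w v}"
    unfolding lcs_len_def
    by (rule Max_in) (use finite_common_subseqs in \<open>auto intro!: exI[of _ "[]"]\<close>)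
  then show ?thesis using that by auto
qed

lemma lcs_len_le_length: "lcs_len u v \<le> length u"
  by (metis lcs_len_attained list_emb_length)

lemma lcs_len_less_length:
  assumes "length u = length v" "u \<noteq> v"
  shows "lcs_len u v < length u"
proof (rule ccontr)
  assume "\<not> ?thesis"
  then have eq: "lcs_len u v = length u" using lcs_len_le_length[of u v] by simp
  obtain w where "subseq w u" "subseq w v" "length w = lcs_len u v" by (rule lcs_len_attained)
  then have "w = u" "w = v" using eq assms(1) subseq_same_length by metis+
  then show False using assms(2) by simp
qed

lemma lcs_len_Cons_ge: "lcs_len u v + 1 \<le> lcs_len (a # u) (a # v)"
proof -
  obtain w where "subseq w u" "subseq w v" "length w = lcs_len u v" by (rule lcs_len_attained)
  then show ?thesis using lcs_len_ge[of "a # w" "a # u" "a # v"] by simp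
qed

lemma lcs_len_replicate:
  assumes "a \<noteq> b"
  shows "lcs_len (replicate n a) (replicate m b) = 0"
proof -
  obtain w where w: "subseq w (replicate n a)" "subseq w (replicate m b)"
    and len: "length w = lcs_len (replicate n a) (replicate m b)"
    by (rule lcs_len_attained)
  have "x = a \<and> x = b" if "x \<in> set w" for x
    using list_emb_set[OF w(1) that] list_emb_set[OF w(2) that] by fastforce
  then have "w = []" using assms by (cases w) auto
  then show ?thesis using len by simp
qed

lemma subseq_nth_pair:
  assumes "i < j" "j < length u"
  shows "subseq [u ! i, u ! j] u"
proof -
  have "u ! i \<in> set (take j u)" using assms by (simp add: in_set_conv_nth) (metis nth_take)
  then have "subseq ([u ! i] @ [u ! j]) (take j u @ [u ! j] @ drop (Suc j) u)"
    by (intro list_emb_append_mono) (auto simp: subseq_singleton_left)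
  then show ?thesis using id_take_nth_drop[OF assms(2)] by simp
qed

lemma subseq_repeated_letter:
  assumes "card (set u) < length u"
  obtains a where "a \<in> set u" "subseq [a, a] u"
proof -
  have "\<not> distinct u" using assms distinct_card by fastforce
  then obtain xs ys zs a where u: "u = xs @ [a] @ ys @ [a] @ zs" using not_distinct_decomp by blast
  have "subseq [a, a] (a # ys @ [a] @ zs)" by (simp add: subseq_singleton_left)
  then have "subseq [a, a] u" unfolding u by (simp add: subseq_drop_many)
  with that show ?thesis unfolding u by force
qed

lemma replicate_if_pairs_eq:
  assumes "3 \<le> length u"
    and pairs: "\<And>i j. i < j \<Longrightarrow> j < length u \<Longrightarrow> [u ! i, u ! j] = [u ! 0, u ! 1]"
  shows "u = replicate (length u) (u ! 0)"
proof (rule nth_equalityI)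
  have "u ! 1 = u ! 0" using pairs[of 1 2] assms(1) by simp
  then show "u ! k = replicate (length u) (u ! 0) ! k" if "k < length u" for k
    using pairs[of 0 k] that by (cases "k = 0") auto
qed simp

lemma finite_words: "finite (words q n)"
  unfolding words_def
  by (rule finite_subset[of _ "{xs. set xs \<subseteq> {1..q} \<and> length xs \<le> n}"])
    (auto intro: finite_lists_length_le)

lemma card_words: "card (words q n) = q ^ n"
  unfolding words_def using card_lists_length_eq[of "{1..q}" n] by (simp add: conj_commute)

lemma words_nth_mem: "u \<in> words q n \<Longrightarrow> i < n \<Longrightarrow> u ! i \<in> {1..q}"
  unfolding words_def using nth_mem by blast

lemma words_nth_pair: "u \<in> words q n \<Longrightarrow> i < n \<Longrightarrow> j < n \<Longrightarrow> [u ! i, u ! j] \<in> words q 2"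
  using words_nth_mem[of u q n] unfolding words_def by simp

lemma card_le_by_first_letter:
  assumes base: "\<And>D. D \<subseteq> words q n \<Longrightarrow> pairwise (\<lambda>u v. lcs_len u v \<le> m) D \<Longrightarrow> k * card D \<le> B"
    and C: "C \<subseteq> words q (Suc n)" and lcs: "pairwise (\<lambda>u v. lcs_len u v \<le> Suc m) C"
  shows "k * card C \<le> q * B"
proof -
  define D where "D a = {u. a # u \<in> C}" for a
  have D_words: "D a \<subseteq> words q n" for a
  proof
    fix u assume "u \<in> D a"
    then have "a # u \<in> words q (Suc n)" using C unfolding D_def by blast
    then show "u \<in> words q n" unfolding words_def by simp
  qed
  have D_lcs: "pairwise (\<lambda>u v. lcs_len u v \<le> m) (D a)" for a
  proof
    fix u v assume "u \<in> D a" "v \<in> D a" "u \<noteq> v"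
    then have "lcs_len (a # u) (a # v) \<le> Suc m" using lcs unfolding D_def by (auto dest: pairwiseD)
    then show "lcs_len u v \<le> m" using lcs_len_Cons_ge[of u v a] by simp
  qed
  have "C \<subseteq> (\<Union>a\<in>{1..q}. Cons a ` D a)"
  proof
    fix u assume "u \<in> C"
    then obtain a v where "u = a # v" "a \<in> {1..q}" using C unfolding words_def by (cases u) auto
    then show "u \<in> (\<Union>a\<in>{1..q}. Cons a ` D a)" using \<open>u \<in> C\<close> unfolding D_def by auto
  qed
  then have "card C \<le> card (\<Union>a\<in>{1..q}. Cons a ` D a)"
    by (rule card_mono[rotated]) (use D_words finite_words finite_subset in blast)
  also have "\<dots> \<le> (\<Sum>a\<in>{1..q}. card (Cons a ` D a))" by (rule card_UN_le) simp
  also have "\<dots> = (\<Sum>a\<in>{1..q}. card (D a))" by (simp add: card_image)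
  finally have "k * card C \<le> (\<Sum>a\<in>{1..q}. k * card (D a))"
    by (simp add: sum_distrib_left[symmetric])
  also have "\<dots> \<le> (\<Sum>a\<in>{1..q}. B)" by (rule sum_mono) (use base D_words D_lcs in blast)
  finally show ?thesis by simp
qed

lemma card_le_by_prefix:
  assumes base: "\<And>D. D \<subseteq> words q n \<Longrightarrow> pairwise (\<lambda>u v. lcs_len u v \<le> m) D \<Longrightarrow> k * card D \<le> B"
  shows "C \<subseteq> words q (n + j) \<Longrightarrow> pairwise (\<lambda>u v. lcs_len u v \<le> m + j) C
    \<Longrightarrow> k * card C \<le> q ^ j * B"
proof (induction j arbitrary: C)
  case 0
  then show ?case using base by simp
next
  case (Suc j)
  have "k * card C \<le> q * (q ^ j * B)"
    by (rule card_le_by_first_letter[OF Suc.IH]) (use Suc.prems in simp_all)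
  then show ?case by simp
qed

lemma sum_card_subseq_sets_le:
  assumes lcs: "pairwise (\<lambda>u v. lcs_len u v \<le> m) C" and "finite A"
    and S: "\<And>u. u \<in> C \<Longrightarrow> S u \<subseteq> {w \<in> A. subseq w u \<and> m < length w}"
  shows "(\<Sum>u\<in>C. card (S u)) \<le> card A"
proof (cases "finite C")
  case True
  have disjoint: "S u \<inter> S v = {}" if "u \<in> C" "v \<in> C" "u \<noteq> v" for u v
  proof -
    have "lcs_len u v \<le> m" using lcs that by (rule pairwiseD)
    then show ?thesis using S[OF that(1)] S[OF that(2)] lcs_len_ge[of _ u v] by fastforce
  qed
  have S_A: "S u \<subseteq> A" if "u \<in> C" for u using S[OF that] by blast
  then have "\<forall>u\<in>C. finite (S u)" using \<open>finite A\<close> finite_subset by blast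
  then have "(\<Sum>u\<in>C. card (S u)) = card (\<Union>u\<in>C. S u)"
    using card_UN_disjoint[OF True, of S] disjoint by simp
  also have "\<dots> \<le> card A" using S_A by (intro card_mono \<open>finite A\<close>) blast
  finally show ?thesis .
next
  case False
  then show ?thesis by simp
qed

lemma card_le_by_subseq_choice:
  assumes "pairwise (\<lambda>u v. lcs_len u v \<le> m) C" "finite A"
    and "\<And>u. u \<in> C \<Longrightarrow> g u \<in> A \<and> subseq (g u) u \<and> m < length (g u)"
  shows "card C \<le> card A"
proof -
  have "(\<Sum>u\<in>C. card {g u}) \<le> card A"
    by (rule sum_card_subseq_sets_le[OF assms(1,2)]) (use assms(3) in blast)
  then show ?thesis by simp
qed

lemma card_le_of_lcs_len_zero:
  assumes "C \<subseteq> words q n" "1 \<le> n" "pairwise (\<lambda>u v. lcs_len u v \<le> 0) C"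
  shows "card C \<le> q"
proof -
  have "card C \<le> card (words q 1)"
  proof (rule card_le_by_subseq_choice[OF assms(3) finite_words])
    fix u assume "u \<in> C"
    then have "u \<noteq> []" "set u \<subseteq> {1..q}" using assms unfolding words_def by auto
    then have "hd u \<in> set u" "hd u \<in> {1..q}" using hd_in_set by blast+
    then show "[hd u] \<in> words q 1 \<and> subseq [hd u] u \<and> 0 < length [hd u]"
      unfolding words_def by (simp add: subseq_singleton_left)
  qed
  then show ?thesis by (simp add: card_words)
qed

lemma card_le_of_lcs_len_one_long:
  assumes C: "C \<subseteq> words q n" and "q < n" and lcs: "pairwise (\<lambda>u v. lcs_len u v \<le> 1) C"
  shows "card C \<le> q"
proof -
  have "\<exists>a. a \<in> {1..q} \<and> subseq [a, a] u" if "u \<in> C" for u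
  proof -
    have u: "length u = n" "set u \<subseteq> {1..q}" using that C unfolding words_def by auto
    then have "card (set u) < length u" using card_mono[OF _ u(2)] \<open>q < n\<close> by simp
    then show ?thesis using u(2) by (metis subseq_repeated_letter subsetD)
  qed
  then obtain a where a: "\<And>u. u \<in> C \<Longrightarrow> a u \<in> {1..q} \<and> subseq [a u, a u] u" by metis
  have "card C \<le> card ((\<lambda>a. [a, a]) ` {1..q})"
    by (rule card_le_by_subseq_choice[OF lcs, of _ "\<lambda>u. [a u, a u]"]) (use a in auto)
  also have "\<dots> \<le> q" using card_image_le[of "{1..q}" "\<lambda>a. [a, a]"] by simp
  finally show ?thesis .
qed

lemma two_le_card_pair_subseqs:
  assumes u: "u \<in> words q n" and "3 \<le> n" and nonconst: "u \<notin> replicate n ` {1..q}"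
  shows "2 \<le> card {w \<in> words q 2. subseq w u}" (is "_ \<le> card ?S")
proof (rule ccontr)
  assume "\<not> ?thesis"
  then have "card ?S \<le> 1" by simp
  then have S_eq: "x = y" if "x \<in> ?S" "y \<in> ?S" for x y
    using card_le_Suc0_iff_eq[of ?S] finite_words that by fastforce
  have len: "length u = n" using u unfolding words_def by simp
  have pair_in_S: "[u ! i, u ! j] \<in> ?S" if "i < j" "j < length u" for i j
    using subseq_nth_pair[OF that] words_nth_pair[OF u, of i j] that len by simp
  have "u = replicate (length u) (u ! 0)"
  proof (rule replicate_if_pairs_eq)
    show "3 \<le> length u" using len \<open>3 \<le> n\<close> by simp
    show "[u ! i, u ! j] = [u ! 0, u ! 1]" if "i < j" "j < length u" for i j
      using S_eq[OF pair_in_S[OF that]] pair_in_S[of 0 1] len \<open>3 \<le> n\<close> by simp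
  qed
  moreover have "u ! 0 \<in> {1..q}" using words_nth_mem[OF u] \<open>3 \<le> n\<close> by simp
  ultimately show False using nonconst len by blast
qed

lemma two_mul_card_le_of_lcs_len_one:
  assumes C: "C \<subseteq> words q n" and "3 \<le> n" and lcs: "pairwise (\<lambda>u v. lcs_len u v \<le> 1) C"
  shows "2 * card C \<le> q\<^sup>2 + q"
proof -
  define S where "S u = {w \<in> words q 2. subseq w u}" for u
  define K where "K = C \<inter> replicate n ` {1..q}"
  have fin: "finite C" "finite K" using C finite_words finite_subset unfolding K_def by blast+
  have "(\<Sum>u\<in>C. card (S u)) \<le> card (words q 2)"
    by (rule sum_card_subseq_sets_le[OF lcs finite_words]) (auto simp: S_def words_def)
  then have sum_S: "(\<Sum>u\<in>C. card (S u)) \<le> q\<^sup>2" by (simp add: card_words)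
  have "card K \<le> card (replicate n ` {1..q})" unfolding K_def by (rule card_mono) auto
  then have card_K: "card K \<le> q" using card_image_le[of "{1..q}" "replicate n"] by simp
  have finite_S: "finite (S u)" for u unfolding S_def using finite_words by simp
  have one_le: "1 \<le> card (S u)" if "u \<in> C" for u
  proof -
    have u: "u \<in> words q n" using that C by blast
    then have "length u = n" unfolding words_def by simp
    then have "[u ! 0, u ! 1] \<in> S u"
      using subseq_nth_pair[of 0 1 u] words_nth_pair[OF u, of 0 1] \<open>3 \<le> n\<close> unfolding S_def
      by simp
    then show ?thesis using finite_S[of u] card_gt_0_iff[of "S u"] by fastforce
  qed
  have two_le: "2 \<le> card (S u)" if "u \<in> C - K" for u
    using two_le_card_pair_subseqs[of u q n] that C \<open>3 \<le> n\<close> unfolding S_def K_def by blast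
  have "card K + 2 * card (C - K) = (\<Sum>u\<in>K. 1) + (\<Sum>u\<in>C - K. 2)" by simp
  also have "\<dots> \<le> (\<Sum>u\<in>K. card (S u)) + (\<Sum>u\<in>C - K. card (S u))"
    by (intro add_mono sum_mono) (use one_le two_le in \<open>auto simp: K_def\<close>)
  also have "\<dots> = (\<Sum>u\<in>C. card (S u))"
    using sum.subset_diff[of K C "\<lambda>u. card (S u)"] fin unfolding K_def by simp
  finally have "card K + 2 * card (C - K) \<le> q\<^sup>2" using sum_S by simp
  moreover have "card C = card K + card (C - K)"
    using card_Diff_subset[of K C] card_mono[of C K] fin unfolding K_def by auto
  ultimately show ?thesis using card_K by linarith
qed

lemma constant_code:
  assumes "1 \<le> n"
  shows "replicate n ` {1..q} \<subseteq> words q n" "card (replicate n ` {1..q}) = q"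
    "pairwise (\<lambda>u v. lcs_len u v \<le> m) (replicate n ` {1..q})"
proof -
  show "replicate n ` {1..q} \<subseteq> words q n" unfolding words_def by auto
  have "inj_on (replicate n) {1..q}" using assms by (intro inj_onI) (metis hd_replicate not_one_le_zero)
  then show "card (replicate n ` {1..q}) = q" by (simp add: card_image)
  show "pairwise (\<lambda>u v. lcs_len u v \<le> m) (replicate n ` {1..q})"
    by (auto simp: pairwise_def lcs_len_replicate)
qed

lemma code_insdel_dist_ge_iff:
  assumes C: "C \<subseteq> words q n" and "2 \<le> card C" and "t \<le> n"
  shows "2 * t \<le> code_insdel_dist C \<longleftrightarrow> pairwise (\<lambda>u v. lcs_len u v \<le> n - t) C"
proof -
  let ?dists = "{insdel_dist u v | u v. u \<in> C \<and> v \<in> C \<and> u \<noteq> v}"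
  have "finite C" using \<open>2 \<le> card C\<close> card.infinite by force
  then have fin: "finite ?dists"
    by (auto intro: finite_subset[of _ "(\<lambda>(u, v). insdel_dist u v) ` (C \<times> C)"])
  obtain u v where "u \<in> C" "v \<in> C" "u \<noteq> v"
    using \<open>2 \<le> card C\<close> card_le_Suc0_iff_eq[OF \<open>finite C\<close>] by (metis not_less_eq_eq numeral_2_eq_2)
  then have nonempty: "?dists \<noteq> {}" by blast
  have dist: "2 * t \<le> insdel_dist u v \<longleftrightarrow> lcs_len u v \<le> n - t" if "u \<in> C" "v \<in> C" for u v
  proof -
    have "length u = n" "length v = n" using that C unfolding words_def by auto
    moreover have "lcs_len u v \<le> length u" by (rule lcs_len_le_length)
    ultimately show ?thesis unfolding insdel_dist_def using \<open>t \<le> n\<close> by auto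
  qed
  have "2 * t \<le> code_insdel_dist C \<longleftrightarrow> (\<forall>u\<in>C. \<forall>v\<in>C. u \<noteq> v \<longrightarrow> 2 * t \<le> insdel_dist u v)"
    unfolding code_insdel_dist_def Min_ge_iff[OF fin nonempty] by blast
  also have "\<dots> \<longleftrightarrow> pairwise (\<lambda>u v. lcs_len u v \<le> n - t) C"
    unfolding pairwise_def using dist by blast
  finally show ?thesis .
qed

lemma I_q_attained:
  assumes "2 \<le> q" "1 \<le> t" "t \<le> n"
  obtains C where "C \<subseteq> words q n" "pairwise (\<lambda>u v. lcs_len u v \<le> n - t) C"
    "I_q q n (2 * t) = card C"
proof -
  let ?sizes = "{card C | C. C \<subseteq> words q n \<and> 2 \<le> card C \<and> 2 * t \<le> code_insdel_dist C}"
  have "finite ?sizes"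
    by (rule finite_subset[of _ "card ` Pow (words q n)"]) (auto simp: finite_words)
  moreover have "?sizes \<noteq> {}"
  proof -
    let ?K = "replicate n ` {1..q}"
    have "?K \<subseteq> words q n" "2 \<le> card ?K" using constant_code(1,2)[of n q] assms by auto
    moreover have "2 * t \<le> code_insdel_dist ?K"
      using code_insdel_dist_ge_iff[of ?K q n t] constant_code(3)[of n "n - t" q] calculation assms
      by simp
    ultimately show ?thesis by blast
  qed
  ultimately have "I_q q n (2 * t) \<in> ?sizes" unfolding I_q_def by (rule Max_in)
  then show ?thesis using that code_insdel_dist_ge_iff assms(3) by blast
qed

lemma card_le_I_q:
  assumes "C \<subseteq> words q n" "2 \<le> card C" "t \<le> n" "pairwise (\<lambda>u v. lcs_len u v \<le> n - t) C"
  shows "card C \<le> I_q q n (2 * t)"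
proof -
  have "finite {card C | C. C \<subseteq> words q n \<and> 2 \<le> card C \<and> 2 * t \<le> code_insdel_dist C}"
    by (rule finite_subset[of _ "card ` Pow (words q n)"]) (auto simp: finite_words)
  then show ?thesis unfolding I_q_def
    by (rule Max_ge) (use assms code_insdel_dist_ge_iff in blast)
qed

lemma I_q_two:
  assumes "2 \<le> q" "1 \<le> n"
  shows "I_q q n 2 = q ^ n"
proof (rule antisym)
  obtain C where "C \<subseteq> words q n" "I_q q n (2 * 1) = card C"
    using I_q_attained[of q 1 n] assms by auto
  then show "I_q q n 2 \<le> q ^ n" using card_mono[OF finite_words] card_words by simp
  have "q \<le> q ^ n" using assms by (simp add: self_le_power)
  then have "2 \<le> card (words q n)" using assms by (simp add: card_words)
  moreover have "pairwise (\<lambda>u v. lcs_len u v \<le> n - 1) (words q n)"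
  proof
    fix u v assume "u \<in> words q n" "v \<in> words q n" "u \<noteq> v"
    then show "lcs_len u v \<le> n - 1" using lcs_len_less_length[of u v] unfolding words_def by simp
  qed
  ultimately show "q ^ n \<le> I_q q n 2"
    using card_le_I_q[of "words q n" q n 1] assms by (simp add: card_words)
qed

lemma I_q_two_mul_length:
  assumes "2 \<le> q" "1 \<le> n"
  shows "I_q q n (2 * n) = q"
proof (rule antisym)
  obtain C where "C \<subseteq> words q n" "pairwise (\<lambda>u v. lcs_len u v \<le> n - n) C" "I_q q n (2 * n) = card C"
    using I_q_attained[of q n n] assms by auto
  then show "I_q q n (2 * n) \<le> q" using card_le_of_lcs_len_zero[of C q n] assms(2) by simp
  show "q \<le> I_q q n (2 * n)"
    using card_le_I_q[OF constant_code(1)[of n q] _ order.refl constant_code(3)] constant_code(2) assms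
    by simp
qed

lemma two_mul_I_q_le:
  assumes "2 \<le> q" "2 \<le> t" "t < n"
  shows "2 * I_q q n (2 * t) \<le> q ^ (n - t + 1) + q ^ (n - t)"
proof -
  obtain C where C: "C \<subseteq> words q n" and lcs: "pairwise (\<lambda>u v. lcs_len u v \<le> n - t) C"
    and I: "I_q q n (2 * t) = card C"
    using I_q_attained[of q t n] assms by auto
  define j where "j = n - t - 1"
  have n_t: "n - t = Suc j" using assms unfolding j_def by simp
  have "2 * card C \<le> q ^ j * (q\<^sup>2 + q)"
  proof (rule card_le_by_prefix[where n = "t + 1" and m = 1])
    show "2 * card D \<le> q\<^sup>2 + q" if "D \<subseteq> words q (t + 1)" "pairwise (\<lambda>u v. lcs_len u v \<le> 1) D" for D
      using two_mul_card_le_of_lcs_len_one[OF that(1) _ that(2)] assms by simp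
    show "C \<subseteq> words q (t + 1 + j)" using C assms(3) unfolding j_def by simp
    show "pairwise (\<lambda>u v. lcs_len u v \<le> 1 + j) C" using lcs n_t by simp
  qed
  also have "\<dots> = q ^ (n - t + 1) + q ^ (n - t)" by (simp add: n_t power2_eq_square algebra_simps)
  finally show ?thesis using I by simp
qed

lemma I_q_le_power:
  assumes "2 \<le> q" "q \<le> t" "t < n"
  shows "I_q q n (2 * t) \<le> q ^ (n - t)"
proof -
  obtain C where C: "C \<subseteq> words q n" and lcs: "pairwise (\<lambda>u v. lcs_len u v \<le> n - t) C"
    and I: "I_q q n (2 * t) = card C"
    using I_q_attained[of q t n] assms by auto
  define j where "j = n - t - 1"
  have n_t: "n - t = Suc j" using assms unfolding j_def by simp
  have "1 * card C \<le> q ^ j * q"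
  proof (rule card_le_by_prefix[where n = "t + 1" and m = 1])
    show "1 * card D \<le> q" if "D \<subseteq> words q (t + 1)" "pairwise (\<lambda>u v. lcs_len u v \<le> 1) D" for D
      using card_le_of_lcs_len_one_long[OF that(1) _ that(2)] assms by simp
    show "C \<subseteq> words q (t + 1 + j)" using C assms(3) unfolding j_def by simp
    show "pairwise (\<lambda>u v. lcs_len u v \<le> 1 + j) C" using lcs n_t by simp
  qed
  then show ?thesis using I n_t by (simp add: mult.commute)
qed

theorem theorem3p6:
  fixes q n :: nat
  assumes "q \<ge> 2" and "n \<ge> 1"
  shows "(I_q q n 2 = q ^ n \<and> I_q q n (2 * n) = q)
    \<and> (\<forall>d. even d \<and> 4 \<le> d \<and> d \<le> 2 * n - 2 \<longrightarrow>
           real (I_q q n d) \<le> (real q ^ (n - d div 2 + 1) + real q ^ (n - d div 2)) / 2)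
    \<and> (\<forall>d. even d \<and> 2 * q \<le> d \<and> d \<le> 2 * n - 2 \<longrightarrow>
           I_q q n d \<le> q ^ (n - d div 2))"
proof (intro conjI allI impI)
  show "I_q q n 2 = q ^ n" using I_q_two[OF assms] .
  show "I_q q n (2 * n) = q" using I_q_two_mul_length[OF assms] .
next
  fix d assume "even d \<and> 4 \<le> d \<and> d \<le> 2 * n - 2"
  then obtain t where t: "d = 2 * t" "2 \<le> t" "t < n" by (auto elim!: evenE)
  then have "real (2 * I_q q n d) \<le> real (q ^ (n - t + 1) + q ^ (n - t))"
    using two_mul_I_q_le[OF assms(1)] of_nat_mono by blast
  then show "real (I_q q n d) \<le> (real q ^ (n - d div 2 + 1) + real q ^ (n - d div 2)) / 2"
    using t(1) by simp
next
  fix d assume "even d \<and> 2 * q \<le> d \<and> d \<le> 2 * n - 2"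
  then obtain t where "d = 2 * t" "q \<le> t" "t < n" using assms(1) by (auto elim!: evenE)
  then show "I_q q n d \<le> q ^ (n - d div 2)" using I_q_le_power[OF assms(1)] by simp
qed

end
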